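(* Let $P\in\mathcal{P}$ and $\alpha\in(0,1]$. Then $P^\alpha\subset\liminf_n P_n^\alpha$ almost surely.
   Context: $\mathcal{P}$ denotes the set of all probability measures on $(\mathbb{R}^d,\mathcal{B}_d)$, $\mathcal{B}_d$ the Borel $\sigma$-algebra, endowed with the topology of weak convergence. For $R\in\mathcal{P}$ and $\alpha\in(0,1]$, the $\alpha$-trimming of $R$ is $R^\alpha=\{Q\in\mathcal{P} : Q(B)\le \alpha^{-1}R(B)\text{ for all } B\in\mathcal{B}_d\}$. $\{X_i\}_{i\ge1}$ are i.i.d. random vectors in $\mathbb{R}^d$ with law $P$, and $P_n=\frac1n\sum_{i=1}^n\delta_{X_i}$ is the empirical probability. For sets $A_n\subset\mathcal{P}$, $\liminf_n A_n=\{Q\in\mathcal{P}:\exists\, Q_n\in A_n \text{ for all } n \text{ with } Q_n\to Q \text{ weakly}\}$ and $\limsup_n A_n=\{Q\in\mathcal{P}:\exists\, n_1<n_2<\dots,\ Q_{n_k}\in A_{n_k},\ Q_{n_k}\to Q\text{ weakly}\}$. *)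

theory Defs
  imports "HOL-Probability.Probability"
begin

definition probs :: "'a::euclidean_space measure set" where
  "probs = {Q. sets Q = sets borel \<and> prob_space Q}"

definition weak_conv :: "(nat \<Rightarrow> 'a::euclidean_space measure) \<Rightarrow> 'a measure \<Rightarrow> bool" where
  "weak_conv Qs Q \<longleftrightarrow>
     (\<forall>f :: 'a \<Rightarrow> real. continuous_on UNIV f \<and> bounded (range f) \<longrightarrow>
        (\<lambda>n. integral\<^sup>L (Qs n) f) \<longlonglongrightarrow> integral\<^sup>L Q f)"

definition trimming :: "real \<Rightarrow> 'a::euclidean_space measure \<Rightarrow> 'a measure set" where
  "trimming \<alpha> R = {Q \<in> probs. \<forall>B \<in> sets borel. measure Q B \<le> measure R B / \<alpha>}"

definition set_liminf :: "(nat \<Rightarrow> 'a::euclidean_space measure set) \<Rightarrow> 'a measure set" where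
  "set_liminf A = {Q \<in> probs. \<exists>Qs. (\<forall>n\<ge>1. Qs n \<in> A n) \<and> weak_conv Qs Q}"

definition empirical :: "(nat \<Rightarrow> 'w \<Rightarrow> 'a::euclidean_space) \<Rightarrow> nat \<Rightarrow> 'w \<Rightarrow> 'a measure" where
  "empirical X n \<omega> = distr (uniform_count_measure {..<n}) borel (\<lambda>i. X i \<omega>)"

end

theory Submission
  imports Defs
begin

text \<open>
  The proof works with the dyadic partitions of R^d (cubes of side 2^-k inside the box [-k,k)^d,
  together with its complement): they are finite Borel partitions whose cells shrink to points.
  (1) Strong law: Hoeffding's inequality and Borel-Cantelli give P n(A) --> P(A) a.s. for every
      Borel set A, hence a.s. simultaneously for the countably many dyadic cells.
  (2) Matching cell masses: at a fixed level, cap the cell masses of Q by P n / alpha and spread the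
      missing mass over the cells in proportion to the remaining room; the cellwise constant density
      with these masses gives Q n in the trimming of P n whose cell masses tend to those of Q.
  (3) A diagonal choice of levels k n growing slowly gives Q n whose level-(k n) cell masses are
      L1-close to those of Q.
  (4) For bounded continuous f, the error in the integral of f is controlled by the oscillation of f on
      the cells (which vanishes by dominated convergence) plus the L1 distance of the cell masses.
  The file follows this order; the main theorem is assembled at the end.
\<close>

lemma probsD:
  assumes "\<mu> \<in> probs"
  shows "sets \<mu> = sets borel" and "space \<mu> = UNIV" and "prob_space \<mu>"
proof -
  show sets: "sets \<mu> = sets borel" and "prob_space \<mu>"
    using assms by (simp_all add: probs_def)
  from sets show "space \<mu> = UNIV"
    by (metis sets_eq_imp_space_eq space_borel)
qed

lemma empirical_measurable: "(\<lambda>i. X i \<omega>) \<in> measurable (uniform_count_measure {..<n}) borel"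
  by (simp cong: measurable_cong_sets)

lemma sets_empirical [simp]: "sets (empirical X n \<omega>) = sets borel"
  and space_empirical [simp]: "space (empirical X n \<omega>) = UNIV"
  by (simp_all add: empirical_def)

lemma empirical_in_probs: "0 < n \<Longrightarrow> empirical X n \<omega> \<in> probs"
  unfolding probs_def empirical_def
  by (auto intro!: prob_space.prob_space_distr[OF prob_space_uniform_count_measure empirical_measurable])

lemma measure_empirical:
  assumes "A \<in> sets borel"
  shows "measure (empirical X n \<omega>) A = (\<Sum>i<n. indicator A (X i \<omega>)) / real n"
proof -
  have "measure (empirical X n \<omega>) A = integral\<^sup>L (empirical X n \<omega>) (indicator A)"
    by simp
  also have "\<dots> = (\<Sum>i<n. indicator A (X i \<omega>)) / real n"
    unfolding empirical_def using assms
    by (subst integral_distr[OF empirical_measurable]) (simp_all add: integral_uniform_count_measure)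
  finally show ?thesis .
qed

lemma AE_tendsto_of_summable_deviations:
  fixes S :: "nat \<Rightarrow> 'w \<Rightarrow> real"
  assumes "prob_space M" and S_meas: "\<And>n. S n \<in> borel_measurable M"
    and summ: "\<And>e. 0 < e \<Longrightarrow> summable (\<lambda>n. measure M {\<omega>\<in>space M. e \<le> \<bar>S n \<omega> - c\<bar>})"
  shows "AE \<omega> in M. (\<lambda>n. S n \<omega>) \<longlonglongrightarrow> c"
proof -
  interpret prob_space M by fact
  have close: "AE \<omega> in M. eventually (\<lambda>n. \<bar>S n \<omega> - c\<bar> < 1 / Suc m) sequentially" for m
  proof -
    let ?B = "\<lambda>n. {\<omega>\<in>space M. 1 / Suc m \<le> \<bar>S n \<omega> - c\<bar>}"
    have "?B n \<in> sets M" for n using S_meas[of n] by measurable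
    then have "AE \<omega> in M. eventually (\<lambda>n. \<omega> \<in> space M - ?B n) sequentially"
      using summ[of "1 / Suc m"] by (intro borel_cantelli_AE1) (auto simp: emeasure_eq_measure)
    then show ?thesis
      by (rule AE_mp) (auto intro!: AE_I2 elim: eventually_mono)
  qed
  have "AE \<omega> in M. \<forall>m. eventually (\<lambda>n. \<bar>S n \<omega> - c\<bar> < 1 / Suc m) sequentially"
    using close by (simp add: AE_all_countable)
  then show ?thesis
  proof (rule AE_mp, intro AE_I2 impI)
    fix \<omega> assume near: "\<forall>m. eventually (\<lambda>n. \<bar>S n \<omega> - c\<bar> < 1 / Suc m) sequentially"
    show "(\<lambda>n. S n \<omega>) \<longlonglongrightarrow> c"
    proof (rule tendstoI)
      fix r :: real assume "0 < r"
      then obtain m where "1 / Suc m < r" by (rule nat_approx_posE)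
      with near[rule_format, of m] show "eventually (\<lambda>n. dist (S n \<omega>) c < r) sequentially"
        by (auto simp: dist_real_def elim: eventually_mono)
    qed
  qed
qed

text \<open>Hoeffding's inequality for the sample frequency of a Borel set A; the indicators of A
  along the sample are i.i.d. with values in [0,1] and mean P(A).\<close>

lemma hoeffding_frequency:
  fixes M :: "'w measure" and X :: "nat \<Rightarrow> 'w \<Rightarrow> 'a::euclidean_space"
  assumes "prob_space M"
    and X_meas: "\<And>i. X i \<in> borel_measurable M"
    and indep: "prob_space.indep_vars M (\<lambda>_. borel) X UNIV"
    and distr_X: "\<And>i. distr M borel (X i) = P"
    and A: "A \<in> sets borel" and "0 < n" and "0 \<le> e"
  shows "measure M {\<omega>\<in>space M. e \<le> \<bar>(\<Sum>i<n. indicator A (X i \<omega>)) / real n - measure P A\<bar>}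
     \<le> 2 * exp (-2 * real n * e\<^sup>2)"
proof -
  interpret prob_space M by fact
  define Z where "Z = (\<lambda>i \<omega>. indicator A (X i \<omega>) :: real)"
  have Z_meas [measurable]: "Z i \<in> borel_measurable M" for i
    unfolding Z_def using X_meas A by measurable
  have distr_Z: "distr M borel (Z i) = distr P borel (indicator A)" for i
    unfolding Z_def using X_meas A
    by (subst distr_X[of i, symmetric], subst distr_distr) (auto simp: o_def)
  have "indep_vars (\<lambda>_. borel) (\<lambda>i. indicator A \<circ> X i) UNIV"
    by (rule indep_vars_compose[OF indep]) (use A in auto)
  then have indep_Z: "indep_vars (\<lambda>_. borel) Z {..<n}"
    unfolding Z_def by (auto simp: o_def intro: indep_vars_subset)
  interpret Z: Hoeffding_ineq_iid M "{..<n}" Z "Z 0" 0 1 "expectation (Z 0)"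
  proof unfold_locales
    show "distr M borel (Z i) = distr M borel (Z 0)" for i by (simp add: distr_Z)
    show "AE x in M. Z 0 x \<in> {0..1}" by (rule AE_I2) (simp add: Z_def)
  qed (use indep_Z in auto)
  have "expectation (Z 0) = measure P A"
  proof -
    have "expectation (Z 0) = integral\<^sup>L (distr M borel (X 0)) (indicator A)"
      unfolding Z_def using X_meas A by (subst integral_distr) auto
    moreover have "space P = UNIV" using distr_X[of 0] by (metis space_borel space_distr)
    ultimately show ?thesis using A by (simp add: distr_X)
  qed
  then show ?thesis
    using Z.Hoeffding_ineq_abs_ge'[OF \<open>0 \<le> e\<close> zero_less_one] \<open>0 < n\<close> by (auto simp: Z_def)
qed

text \<open>Strong law of large numbers for the sample frequency of a Borel set: the Hoeffding bounds
  decay geometrically in n and are therefore summable.\<close>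

lemma frequency_AE_tendsto:
  fixes M :: "'w measure" and X :: "nat \<Rightarrow> 'w \<Rightarrow> 'a::euclidean_space"
  assumes "prob_space M"
    and X_meas: "\<And>i. X i \<in> borel_measurable M"
    and "prob_space.indep_vars M (\<lambda>_. borel) X UNIV"
    and "\<And>i. distr M borel (X i) = P"
    and A: "A \<in> sets borel"
  shows "AE \<omega> in M. (\<lambda>n. (\<Sum>i<n. indicator A (X i \<omega>)) / real n) \<longlonglongrightarrow> measure P A"
proof (rule AE_tendsto_of_summable_deviations[OF assms(1)])
  show "(\<lambda>\<omega>. (\<Sum>i<n. indicator A (X i \<omega>)) / real n) \<in> borel_measurable M" for n
    using X_meas A by measurable
  fix e :: real assume "0 < e"
  define r where "r = exp (-2 * e\<^sup>2)"
  have "0 \<le> r" "r < 1" using \<open>0 < e\<close> by (auto simp: r_def)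
  then have geom: "summable (\<lambda>n. 2 * r ^ Suc n)"
    by (intro summable_mult summable_Suc_iff[THEN iffD2] summable_geometric) auto
  have "measure M {\<omega>\<in>space M. e \<le> \<bar>(\<Sum>i<Suc n. indicator A (X i \<omega>)) / real (Suc n) - measure P A\<bar>}
      \<le> 2 * r ^ Suc n" for n
  proof -
    have "exp (-2 * real (Suc n) * e\<^sup>2) = r ^ Suc n"
      unfolding r_def by (subst exp_of_nat_mult[symmetric]) (simp add: algebra_simps)
    then show ?thesis
      using hoeffding_frequency[OF assms, where n="Suc n" and e=e] \<open>0 < e\<close> by simp
  qed
  then have "summable (\<lambda>n. measure M {\<omega>\<in>space M. e \<le> \<bar>(\<Sum>i<Suc n. indicator A (X i \<omega>)) / real (Suc n) - measure P A\<bar>})"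
    by (intro summable_comparison_test'[OF geom]) auto
  then show "summable (\<lambda>n. measure M {\<omega>\<in>space M. e \<le> \<bar>(\<Sum>i<n. indicator A (X i \<omega>)) / real n - measure P A\<bar>})"
    by (subst summable_Suc_iff[symmetric])
qed

lemma empirical_AE_tendsto_countable:
  fixes M :: "'w measure" and X :: "nat \<Rightarrow> 'w \<Rightarrow> 'a::euclidean_space"
  assumes "prob_space M"
    and "\<And>i. X i \<in> borel_measurable M"
    and "prob_space.indep_vars M (\<lambda>_. borel) X UNIV"
    and "\<And>i. distr M borel (X i) = P"
    and "countable \<A>" and "\<A> \<subseteq> sets borel"
  shows "AE \<omega> in M. \<forall>A\<in>\<A>. (\<lambda>n. measure (empirical X n \<omega>) A) \<longlonglongrightarrow> measure P A"
proof -
  interpret prob_space M by fact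
  have "AE \<omega> in M. (\<lambda>n. measure (empirical X n \<omega>) A) \<longlonglongrightarrow> measure P A" if "A \<in> \<A>" for A
    using frequency_AE_tendsto[OF assms(1-4), of A] that assms(6)
    by (auto simp: measure_empirical elim!: AE_mp)
  then show ?thesis
    using assms(5) by (simp add: AE_ball_countable)
qed

text \<open>A sequence of finite Borel partitions, given by their labelling maps, whose cells eventually
  lie in any prescribed neighbourhood of each of their points.\<close>

definition shrinking_partitions :: "(nat \<Rightarrow> 'a::metric_space \<Rightarrow> 'c) \<Rightarrow> bool" where
  "shrinking_partitions \<phi> \<longleftrightarrow>
     (\<forall>k. finite (range (\<phi> k))) \<and> (\<forall>k v. \<phi> k -` {v} \<in> sets borel) \<and>
     (\<forall>x e. 0 < e \<longrightarrow> (\<exists>K. \<forall>k\<ge>K. \<forall>y. \<phi> k y = \<phi> k x \<longrightarrow> dist y x < e))"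

definition in_box :: "nat \<Rightarrow> 'a::euclidean_space \<Rightarrow> bool" where
  "in_box k x \<longleftrightarrow> (\<forall>b\<in>Basis. - real k \<le> x \<bullet> b \<and> x \<bullet> b < real k)"

definition dyadic_cell :: "nat \<Rightarrow> 'a::euclidean_space \<Rightarrow> ('a \<Rightarrow> int) option" where
  "dyadic_cell k x = (if in_box k x then Some (restrict (\<lambda>b. \<lfloor>2^k * (x \<bullet> b)\<rfloor>) Basis) else None)"

text \<open>Only finitely many labels occur, since the scaled coordinates in the box are bounded.\<close>

lemma finite_range_dyadic_cell: "finite (range (dyadic_cell k :: 'a::euclidean_space \<Rightarrow> _))"
proof -
  let ?J = "{- (int k * 2^k) .. int k * 2^k}"
  have floor_in: "\<lfloor>2^k * t\<rfloor> \<in> ?J" if "- real k \<le> t" "t < real k" for t :: real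
  proof -
    have "2^k * (- real k) \<le> 2^k * t" by (rule mult_left_mono) (use that in auto)
    moreover have "2^k * t < 2^k * real k" by (rule mult_strict_left_mono) (use that in auto)
    moreover have "of_int (int k * 2^k) = 2^k * real k" by simp
    ultimately have "of_int (- (int k * 2^k)) \<le> 2^k * t" "2^k * t < of_int (int k * 2^k) + 1"
      by linarith+
    then show ?thesis by (simp only: atLeastAtMost_iff le_floor_iff floor_le_iff)
  qed
  have "range (dyadic_cell k :: 'a \<Rightarrow> _) \<subseteq> insert None (Some ` Pi\<^sub>E Basis (\<lambda>_. ?J))"
    using floor_in by (auto simp: dyadic_cell_def in_box_def)
  moreover have "finite (insert None (Some ` Pi\<^sub>E (Basis :: 'a set) (\<lambda>_. ?J)))"
    by (intro finite.insertI finite_imageI finite_PiE) auto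
  ultimately show ?thesis by (rule finite_subset)
qed

lemma dyadic_cell_borel: "dyadic_cell k -` {v} \<in> sets (borel :: 'a::euclidean_space measure)"
proof -
  have "dyadic_cell k -` {v} = {x \<in> space borel. case v of None \<Rightarrow> \<not> in_box k (x::'a)
      | Some g \<Rightarrow> in_box k x \<and> g \<in> extensional Basis \<and> (\<forall>b\<in>Basis. \<lfloor>2^k * (x \<bullet> b)\<rfloor> = g b)}"
    by (auto simp: dyadic_cell_def restrict_def extensional_def fun_eq_iff split: option.splits if_splits) metis
  also have "\<dots> \<in> sets borel"
    by (cases v) (simp_all add: in_box_def, measurable)
  finally show ?thesis .
qed

text \<open>Once the box contains x and 2^-k is small, the whole cell of x lies in a small ball around x.\<close>

lemma dyadic_cell_shrinks:
  fixes x :: "'a::euclidean_space"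
  assumes "0 < e"
  shows "\<exists>K. \<forall>k\<ge>K. \<forall>y. dyadic_cell k y = dyadic_cell k x \<longrightarrow> dist y x < e"
proof -
  obtain K1 :: nat where K1: "norm x < real K1" using reals_Archimedean2 by blast
  obtain K2 where K2: "(1/2::real) ^ K2 < e / DIM('a)"
    using real_arch_pow_inv[of "e / DIM('a)" "1/2"] assms by auto
  show ?thesis
  proof (intro exI[of _ "max K1 K2"] allI impI)
    fix k y assume k: "max K1 K2 \<le> k" and same: "dyadic_cell k y = dyadic_cell k x"
    have "in_box k x"
      unfolding in_box_def using Basis_le_norm[of _ x] K1 k by fastforce
    with same have "in_box k y" and
      floors: "\<And>b. b \<in> Basis \<Longrightarrow> \<lfloor>2^k * (y \<bullet> b)\<rfloor> = \<lfloor>2^k * (x \<bullet> b)\<rfloor>"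
      by (auto simp: dyadic_cell_def restrict_def fun_eq_iff split: if_splits)
    have coord: "\<bar>(y - x) \<bullet> b\<bar> < (1/2)^k" if "b \<in> Basis" for b
    proof -
      have "2^k * \<bar>(y - x) \<bullet> b\<bar> = \<bar>2^k * (y \<bullet> b) - 2^k * (x \<bullet> b)\<bar>"
        by (simp add: inner_diff_left abs_mult flip: right_diff_distrib)
      also have "\<dots> < 1"
        using floors[OF that] by linarith
      finally show ?thesis
        by (simp add: power_one_over field_simps)
    qed
    have "dist y x \<le> (\<Sum>b\<in>Basis. \<bar>(y - x) \<bullet> b\<bar>)"
      unfolding dist_norm by (rule norm_le_l1)
    also have "\<dots> < (\<Sum>b\<in>(Basis::'a set). (1/2)^k)"
      by (rule sum_strict_mono) (auto intro: coord)
    also have "\<dots> = DIM('a) * (1/2)^k" by simp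
    also have "\<dots> \<le> DIM('a) * (1/2)^K2"
      using k by (intro mult_left_mono power_decreasing) auto
    also have "\<dots> < e"
      using K2 by (simp add: field_simps)
    finally show "dist y x < e" .
  qed
qed

lemma shrinking_partitions_dyadic_cell:
  "shrinking_partitions (dyadic_cell :: nat \<Rightarrow> 'a::euclidean_space \<Rightarrow> _)"
  unfolding shrinking_partitions_def
  using finite_range_dyadic_cell dyadic_cell_borel dyadic_cell_shrinks by blast

lemma cell_integral:
  fixes \<phi> :: "'a::euclidean_space \<Rightarrow> 'c" and G :: "'c \<Rightarrow> real"
  assumes fin: "finite (range \<phi>)" and cells: "\<And>v. \<phi> -` {v} \<in> sets borel"
    and "\<nu> \<in> probs"
  shows "integrable \<nu> (\<lambda>x. G (\<phi> x))"
    and "integral\<^sup>L \<nu> (\<lambda>x. G (\<phi> x)) = (\<Sum>v\<in>range \<phi>. G v * measure \<nu> (\<phi> -` {v}))"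
proof -
  interpret prob_space \<nu> using probsD(3)[OF assms(3)] .
  have simple: "(\<lambda>x. G (\<phi> x)) = (\<lambda>x. \<Sum>v\<in>range \<phi>. G v * indicator (\<phi> -` {v}) x)"
  proof
    fix x
    have "(\<Sum>v\<in>range \<phi>. G v * indicator (\<phi> -` {v}) x) = (\<Sum>v\<in>range \<phi>. if v = \<phi> x then G v else 0)"
      by (intro sum.cong) (auto simp: indicator_def)
    then show "G (\<phi> x) = (\<Sum>v\<in>range \<phi>. G v * indicator (\<phi> -` {v}) x)"
      using fin by simp
  qed
  have "\<phi> -` {v} \<in> sets \<nu>" for v using cells probsD(1)[OF assms(3)] by simp
  then have int: "integrable \<nu> (\<lambda>x. G v * indicator (\<phi> -` {v}) x)" for v
    by (intro integrable_mult_right integrable_real_indicator) (simp_all add: emeasure_eq_measure)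
  show "integrable \<nu> (\<lambda>x. G (\<phi> x))" unfolding simple using int by simp
  show "integral\<^sup>L \<nu> (\<lambda>x. G (\<phi> x)) = (\<Sum>v\<in>range \<phi>. G v * measure \<nu> (\<phi> -` {v}))"
    unfolding simple using int by (simp add: probsD(2)[OF assms(3)])
qed

definition cell_rep :: "('a \<Rightarrow> 'c) \<Rightarrow> 'c \<Rightarrow> 'a" where
  "cell_rep \<phi> v = (SOME y. \<phi> y = v)"

definition cell_osc :: "('a \<Rightarrow> real) \<Rightarrow> ('a \<Rightarrow> 'c) \<Rightarrow> 'c \<Rightarrow> real" where
  "cell_osc f \<phi> v = (SUP y\<in>\<phi> -` {v}. \<bar>f y - f (cell_rep \<phi> v)\<bar>)"

lemma cell_osc_bounds:
  fixes f :: "'a \<Rightarrow> real"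
  assumes bound: "\<And>x. \<bar>f x\<bar> \<le> B"
  shows "\<bar>f x - f (cell_rep \<phi> (\<phi> x))\<bar> \<le> cell_osc f \<phi> (\<phi> x)"
    and "cell_osc f \<phi> (\<phi> x) \<le> 2 * B"
    and "0 \<le> cell_osc f \<phi> (\<phi> x)"
proof -
  have diff: "\<bar>f y - f z\<bar> \<le> 2 * B" for y z using bound[of y] bound[of z] by linarith
  then have "bdd_above ((\<lambda>y. \<bar>f y - f (cell_rep \<phi> (\<phi> x))\<bar>) ` (\<phi> -` {\<phi> x}))"
    by (intro bdd_aboveI2)
  then show upper: "\<bar>f x - f (cell_rep \<phi> (\<phi> x))\<bar> \<le> cell_osc f \<phi> (\<phi> x)"
    unfolding cell_osc_def by (rule cSUP_upper[rotated]) simp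
  then show "0 \<le> cell_osc f \<phi> (\<phi> x)"
    by (rule order_trans[OF abs_ge_zero])
  show "cell_osc f \<phi> (\<phi> x) \<le> 2 * B"
    unfolding cell_osc_def by (rule cSUP_least) (auto intro: diff)
qed

lemma cell_approximation_error:
  fixes \<phi> :: "'a::euclidean_space \<Rightarrow> 'c" and f :: "'a \<Rightarrow> real"
  assumes fin: "finite (range \<phi>)" and cells: "\<And>v. \<phi> -` {v} \<in> sets borel"
    and \<nu>: "\<nu> \<in> probs" and f_meas: "f \<in> borel_measurable borel" and bound: "\<And>x. \<bar>f x\<bar> \<le> B"
  shows "\<bar>integral\<^sup>L \<nu> f - (\<Sum>v\<in>range \<phi>. f (cell_rep \<phi> v) * measure \<nu> (\<phi> -` {v}))\<bar>
      \<le> (\<Sum>v\<in>range \<phi>. cell_osc f \<phi> v * measure \<nu> (\<phi> -` {v}))"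
proof -
  interpret prob_space \<nu> using probsD(3)[OF \<nu>] .
  note rep = cell_integral[OF fin cells \<nu>, of "\<lambda>v. f (cell_rep \<phi> v)"]
  note osc = cell_integral[OF fin cells \<nu>, of "cell_osc f \<phi>"]
  have f_int: "integrable \<nu> f"
    by (rule integrable_const_bound[where B=B]) (use bound f_meas probsD(1)[OF \<nu>] in auto)
  have "integral\<^sup>L \<nu> f - (\<Sum>v\<in>range \<phi>. f (cell_rep \<phi> v) * measure \<nu> (\<phi> -` {v}))
      = integral\<^sup>L \<nu> (\<lambda>x. f x - f (cell_rep \<phi> (\<phi> x)))"
    using rep f_int by simp
  also have "\<bar>\<dots>\<bar> \<le> integral\<^sup>L \<nu> (\<lambda>x. cell_osc f \<phi> (\<phi> x))"
    by (rule integral_abs_bound_integral) (use rep osc f_int cell_osc_bounds(1)[of f, OF bound] in auto)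
  also have "\<dots> = (\<Sum>v\<in>range \<phi>. cell_osc f \<phi> v * measure \<nu> (\<phi> -` {v}))"
    by (rule osc(2))
  finally show ?thesis .
qed

lemma cell_osc_tendsto_zero:
  fixes \<phi> :: "nat \<Rightarrow> 'a::euclidean_space \<Rightarrow> 'c" and f :: "'a \<Rightarrow> real"
  assumes "shrinking_partitions \<phi>" and "isCont f x" and bound: "\<And>x. \<bar>f x\<bar> \<le> B"
  shows "(\<lambda>k. cell_osc f (\<phi> k) (\<phi> k x)) \<longlonglongrightarrow> 0"
proof (rule LIMSEQ_I)
  fix r :: real assume "0 < r"
  then obtain d where "0 < d" and d: "\<And>y. dist y x < d \<Longrightarrow> dist (f y) (f x) < r / 3"
    using \<open>isCont f x\<close> unfolding continuous_at_eps_delta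
    by (metis zero_less_divide_iff zero_less_numeral)
  obtain K where K: "\<And>k y. K \<le> k \<Longrightarrow> \<phi> k y = \<phi> k x \<Longrightarrow> dist y x < d"
    using \<open>shrinking_partitions \<phi>\<close> \<open>0 < d\<close> unfolding shrinking_partitions_def by metis
  have "norm (cell_osc f (\<phi> k) (\<phi> k x) - 0) < r" if "K \<le> k" for k
  proof -
    have rep: "\<phi> k (cell_rep (\<phi> k) (\<phi> k x)) = \<phi> k x"
      unfolding cell_rep_def by (rule someI_ex) auto
    have "cell_osc f (\<phi> k) (\<phi> k x) \<le> 2 * (r / 3)"
      unfolding cell_osc_def
    proof (rule cSUP_least)
      fix y assume "y \<in> \<phi> k -` {\<phi> k x}"
      then have "dist (f y) (f x) < r / 3" using d K[OF that] by auto
      moreover have "dist (f (cell_rep (\<phi> k) (\<phi> k x))) (f x) < r / 3"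
        using d K[OF that rep] by auto
      ultimately show "\<bar>f y - f (cell_rep (\<phi> k) (\<phi> k x))\<bar> \<le> 2 * (r / 3)"
        unfolding dist_real_def by linarith
    qed auto
    with cell_osc_bounds(3)[of f, OF bound, where \<phi>="\<phi> k" and x=x]
    show ?thesis using \<open>0 < r\<close> by simp
  qed
  then show "\<exists>K. \<forall>k\<ge>K. norm (cell_osc f (\<phi> k) (\<phi> k x) - 0) < r" by blast
qed

text \<open>Dominated convergence: the integrated oscillation of a bounded continuous function vanishes
  in the limit of shrinking partitions.\<close>

lemma cell_osc_integral_tendsto_zero:
  fixes \<phi> :: "nat \<Rightarrow> 'a::euclidean_space \<Rightarrow> 'c" and f :: "'a \<Rightarrow> real"
  assumes part: "shrinking_partitions \<phi>" and cont: "continuous_on UNIV f"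
    and bound: "\<And>x. \<bar>f x\<bar> \<le> B" and Q: "Q \<in> probs"
  shows "(\<lambda>k. \<Sum>v\<in>range (\<phi> k). cell_osc f (\<phi> k) v * measure Q (\<phi> k -` {v})) \<longlonglongrightarrow> 0"
proof -
  interpret prob_space Q using probsD(3)[OF Q] .
  have fin: "finite (range (\<phi> k))" and cells: "\<phi> k -` {v} \<in> sets borel" for k v
    using part by (auto simp: shrinking_partitions_def)
  have "(\<lambda>k. integral\<^sup>L Q (\<lambda>x. cell_osc f (\<phi> k) (\<phi> k x))) \<longlonglongrightarrow> integral\<^sup>L Q (\<lambda>x. 0)"
  proof (rule integral_dominated_convergence[where w="\<lambda>x. 2 * B"])
    show "(\<lambda>x. cell_osc f (\<phi> k) (\<phi> k x)) \<in> borel_measurable Q" for k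
      using cell_integral(1)[OF fin cells Q] by (rule borel_measurable_integrable)
    show "AE x in Q. norm (cell_osc f (\<phi> k) (\<phi> k x)) \<le> 2 * B" for k
      using cell_osc_bounds(2,3)[of f, OF bound, where \<phi>="\<phi> k"] by (intro AE_I2) simp
    show "AE x in Q. (\<lambda>k. cell_osc f (\<phi> k) (\<phi> k x)) \<longlonglongrightarrow> 0"
      using cont by (intro AE_I2 cell_osc_tendsto_zero[OF part _ bound])
        (simp add: continuous_on_eq_continuous_at)
  qed simp_all
  then show ?thesis
    by (simp add: cell_integral(2)[OF fin cells Q])
qed

lemma integral_difference_cells:
  fixes \<phi> :: "'a::euclidean_space \<Rightarrow> 'c" and f :: "'a \<Rightarrow> real"
  assumes fin: "finite (range \<phi>)" and cells: "\<And>v. \<phi> -` {v} \<in> sets borel"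
    and \<mu>: "\<mu> \<in> probs" and Q: "Q \<in> probs"
    and f_meas: "f \<in> borel_measurable borel" and bound: "\<And>x. \<bar>f x\<bar> \<le> B"
  defines "I \<equiv> (\<Sum>v\<in>range \<phi>. cell_osc f \<phi> v * measure Q (\<phi> -` {v}))"
    and "D \<equiv> (\<Sum>v\<in>range \<phi>. \<bar>measure \<mu> (\<phi> -` {v}) - measure Q (\<phi> -` {v})\<bar>)"
  shows "\<bar>integral\<^sup>L \<mu> f - integral\<^sup>L Q f\<bar> \<le> 2 * I + 3 * B * D"
proof -
  let ?R = "range \<phi>"
  let ?m = "\<lambda>v. measure \<mu> (\<phi> -` {v})" and ?q = "\<lambda>v. measure Q (\<phi> -` {v})"
  let ?osc = "cell_osc f \<phi>" and ?y = "\<lambda>v. f (cell_rep \<phi> v)"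
  have osc_le: "0 \<le> ?osc v" "?osc v \<le> 2 * B" if "v \<in> ?R" for v
    using that cell_osc_bounds(2,3)[of f, OF bound, where \<phi>=\<phi>] by auto
  have "(\<Sum>v\<in>?R. ?osc v * ?m v) = I + (\<Sum>v\<in>?R. ?osc v * (?m v - ?q v))"
    unfolding I_def by (simp add: sum_subtractf right_diff_distrib)
  also have "(\<Sum>v\<in>?R. ?osc v * (?m v - ?q v)) \<le> (\<Sum>v\<in>?R. 2 * B * \<bar>?m v - ?q v\<bar>)"
  proof (rule sum_mono)
    fix v assume "v \<in> ?R"
    then have "?osc v * (?m v - ?q v) \<le> ?osc v * \<bar>?m v - ?q v\<bar>"
      using osc_le by (intro mult_left_mono) auto
    also have "\<dots> \<le> 2 * B * \<bar>?m v - ?q v\<bar>"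
      using osc_le \<open>v \<in> ?R\<close> by (intro mult_right_mono) auto
    finally show "?osc v * (?m v - ?q v) \<le> 2 * B * \<bar>?m v - ?q v\<bar>" .
  qed
  finally have osc_mu: "(\<Sum>v\<in>?R. ?osc v * ?m v) \<le> I + 2 * B * D"
    unfolding D_def by (simp add: sum_distrib_left)
  have "\<bar>(\<Sum>v\<in>?R. ?y v * ?m v) - (\<Sum>v\<in>?R. ?y v * ?q v)\<bar> = \<bar>\<Sum>v\<in>?R. ?y v * (?m v - ?q v)\<bar>"
    by (simp add: sum_subtractf algebra_simps)
  also have "\<dots> \<le> (\<Sum>v\<in>?R. B * \<bar>?m v - ?q v\<bar>)"
    by (rule order_trans[OF sum_abs sum_mono]) (simp add: abs_mult bound mult_right_mono)
  finally have sums: "\<bar>(\<Sum>v\<in>?R. ?y v * ?m v) - (\<Sum>v\<in>?R. ?y v * ?q v)\<bar> \<le> B * D"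
    unfolding D_def by (simp add: sum_distrib_left)
  have "0 \<le> D" unfolding D_def by (intro sum_nonneg) auto
  moreover have "0 \<le> B" using bound[of undefined] by linarith
  ultimately show ?thesis
    using cell_approximation_error[OF fin cells \<mu> f_meas bound]
      cell_approximation_error[OF fin cells Q f_meas bound] osc_mu sums
    unfolding I_def by linarith
qed

lemma weak_conv_of_cell_convergence:
  fixes \<phi> :: "nat \<Rightarrow> 'a::euclidean_space \<Rightarrow> 'c" and \<mu> :: "nat \<Rightarrow> 'a measure"
  assumes part: "shrinking_partitions \<phi>" and \<mu>: "eventually (\<lambda>n. \<mu> n \<in> probs) sequentially"
    and Q: "Q \<in> probs" and kn: "filterlim kn at_top sequentially"
    and conv: "(\<lambda>n. \<Sum>v\<in>range (\<phi> (kn n)).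
                  \<bar>measure (\<mu> n) (\<phi> (kn n) -` {v}) - measure Q (\<phi> (kn n) -` {v})\<bar>) \<longlonglongrightarrow> 0"
  shows "weak_conv \<mu> Q"
  unfolding weak_conv_def
proof (intro allI impI, elim conjE)
  fix f :: "'a \<Rightarrow> real"
  assume cont: "continuous_on UNIV f" and "bounded (range f)"
  then obtain B where bound: "\<And>x. \<bar>f x\<bar> \<le> B"
    unfolding bounded_iff by auto
  have f_meas: "f \<in> borel_measurable borel"
    using cont by (rule borel_measurable_continuous_onI)
  have fin: "finite (range (\<phi> k))" and cells: "\<phi> k -` {v} \<in> sets borel" for k v
    using part by (auto simp: shrinking_partitions_def)
  define I where "I k = (\<Sum>v\<in>range (\<phi> k). cell_osc f (\<phi> k) v * measure Q (\<phi> k -` {v}))" for k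
  have "(\<lambda>n. I (kn n)) \<longlonglongrightarrow> 0"
    using filterlim_compose[OF cell_osc_integral_tendsto_zero[OF part cont bound Q] kn]
    by (simp add: I_def)
  with conv have bound_lim: "(\<lambda>n. 2 * I (kn n) + 3 * B *
      (\<Sum>v\<in>range (\<phi> (kn n)). \<bar>measure (\<mu> n) (\<phi> (kn n) -` {v}) - measure Q (\<phi> (kn n) -` {v})\<bar>)) \<longlonglongrightarrow> 0"
    by (auto intro!: tendsto_eq_intros)
  have "(\<lambda>n. integral\<^sup>L (\<mu> n) f - integral\<^sup>L Q f) \<longlonglongrightarrow> 0"
  proof (rule Lim_null_comparison[OF _ bound_lim])
    show "eventually (\<lambda>n. norm (integral\<^sup>L (\<mu> n) f - integral\<^sup>L Q f) \<le> 2 * I (kn n) + 3 * B *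
      (\<Sum>v\<in>range (\<phi> (kn n)). \<bar>measure (\<mu> n) (\<phi> (kn n) -` {v}) - measure Q (\<phi> (kn n) -` {v})\<bar>)) sequentially"
      using \<mu> by eventually_elim
        (simp add: I_def integral_difference_cells[OF fin cells _ Q f_meas bound])
  qed
  then show "(\<lambda>n. integral\<^sup>L (\<mu> n) f) \<longlonglongrightarrow> integral\<^sup>L Q f"
    by (rule LIM_zero_cancel)
qed

text \<open>Target cell masses at one level: the masses q of Q capped by p / alpha, plus the missing mass
  1 - W distributed proportionally to the remaining room p / alpha - capped mass, whose total is
  1 / alpha - W >= 1 - W.\<close>

definition capped_weight :: "real \<Rightarrow> ('c \<Rightarrow> real) \<Rightarrow> ('c \<Rightarrow> real) \<Rightarrow> 'c \<Rightarrow> real" where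
  "capped_weight \<alpha> p q v = min (q v) (p v / \<alpha>)"

definition trim_weight :: "real \<Rightarrow> 'c set \<Rightarrow> ('c \<Rightarrow> real) \<Rightarrow> ('c \<Rightarrow> real) \<Rightarrow> 'c \<Rightarrow> real" where
  "trim_weight \<alpha> R p q v =
     (let W = sum (capped_weight \<alpha> p q) R
      in capped_weight \<alpha> p q v + (1 - W) / (1 / \<alpha> - W) * (p v / \<alpha> - capped_weight \<alpha> p q v))"

lemma trim_weight_properties:
  assumes "finite R" and p0: "\<And>v. 0 \<le> p v" and q0: "\<And>v. 0 \<le> q v"
    and sum_p: "sum p R = 1" and sum_q: "sum q R = 1" and "0 < \<alpha>" and "\<alpha> \<le> 1"
  shows "0 \<le> trim_weight \<alpha> R p q v"
    and "trim_weight \<alpha> R p q v \<le> p v / \<alpha>"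
    and "sum (trim_weight \<alpha> R p q) R = 1"
    and "(\<Sum>v\<in>R. \<bar>trim_weight \<alpha> R p q v - q v\<bar>) \<le> 2 * (1 - sum (capped_weight \<alpha> p q) R)"
proof -
  define w where "w = capped_weight \<alpha> p q"
  define W where "W = sum w R"
  define t where "t = (1 - W) / (1 / \<alpha> - W)"
  have m: "trim_weight \<alpha> R p q v = w v + t * (p v / \<alpha> - w v)" for v
    by (simp add: trim_weight_def Let_def w_def W_def t_def)
  have w0: "0 \<le> w v" and wq: "w v \<le> q v" and wp: "w v \<le> p v / \<alpha>" for v
    using p0[of v] q0[of v] \<open>0 < \<alpha>\<close> by (simp_all add: w_def capped_weight_def)
  have "W \<le> 1"
    unfolding W_def using sum_mono[of R w q] wq sum_q by simp
  moreover have "1 \<le> 1 / \<alpha>" using \<open>0 < \<alpha>\<close> \<open>\<alpha> \<le> 1\<close> by simp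
  ultimately have t0: "0 \<le> t" and t1: "t \<le> 1" and t_slack: "t * (1 / \<alpha> - W) = 1 - W"
    unfolding t_def by (auto simp: divide_le_eq_1)
  have slack: "(\<Sum>v\<in>R. p v / \<alpha> - w v) = 1 / \<alpha> - W"
    unfolding W_def by (simp add: sum_subtractf sum_divide_distrib[symmetric] sum_p)
  have "trim_weight \<alpha> R p q v = (1 - t) * w v + t * (p v / \<alpha>)"
    by (simp add: m algebra_simps)
  also have "\<dots> \<le> (1 - t) * (p v / \<alpha>) + t * (p v / \<alpha>)"
    using t0 t1 wp[of v] by (intro add_mono mult_left_mono) auto
  also have "\<dots> = p v / \<alpha>"
    by (simp add: add_divide_distrib[symmetric] algebra_simps)
  finally show "trim_weight \<alpha> R p q v \<le> p v / \<alpha>" .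
  show "0 \<le> trim_weight \<alpha> R p q v"
    using w0[of v] wp[of v] t0 by (simp add: m)
  show "sum (trim_weight \<alpha> R p q) R = 1"
    using t_slack slack by (simp add: m W_def sum.distrib flip: sum_distrib_left)
  have "(\<Sum>v\<in>R. \<bar>trim_weight \<alpha> R p q v - q v\<bar>) \<le> (\<Sum>v\<in>R. (q v - w v) + t * (p v / \<alpha> - w v))"
    using wq wp t0 by (intro sum_mono) (simp add: m abs_le_iff)
  also have "\<dots> = 2 * (1 - W)"
    using t_slack slack sum_q
    by (simp add: W_def sum.distrib sum_subtractf flip: sum_distrib_left)
  finally show "(\<Sum>v\<in>R. \<bar>trim_weight \<alpha> R p q v - q v\<bar>) \<le> 2 * (1 - sum (capped_weight \<alpha> p q) R)"
    by (simp add: W_def w_def)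
qed

lemma measure_density_real:
  fixes g :: "'a \<Rightarrow> real"
  assumes g_int: "integrable M g" and g0: "\<And>x. 0 \<le> g x" and B: "B \<in> sets M"
  shows "emeasure (density M (\<lambda>x. ennreal (g x))) B = ennreal (\<integral>x. g x * indicator B x \<partial>M)"
    and "measure (density M (\<lambda>x. ennreal (g x))) B = (\<integral>x. g x * indicator B x \<partial>M)"
proof -
  have "emeasure (density M (\<lambda>x. ennreal (g x))) B = (\<integral>\<^sup>+ x. ennreal (g x) * indicator B x \<partial>M)"
    using g_int B by (intro emeasure_density) auto
  also have "\<dots> = (\<integral>\<^sup>+ x. ennreal (g x * indicator B x) \<partial>M)"
    by (intro nn_integral_cong) (auto split: split_indicator)
  also have "\<dots> = ennreal (\<integral>x. g x * indicator B x \<partial>M)"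
    using integrable_mult_indicator[OF B g_int] g0
    by (intro nn_integral_eq_integral) (auto simp: mult.commute)
  finally show emeas: "emeasure (density M (\<lambda>x. ennreal (g x))) B = ennreal (\<integral>x. g x * indicator B x \<partial>M)" .
  moreover have "0 \<le> (\<integral>x. g x * indicator B x \<partial>M)"
    using g0 by (intro Bochner_Integration.integral_nonneg) simp
  ultimately show "measure (density M (\<lambda>x. ennreal (g x))) B = (\<integral>x. g x * indicator B x \<partial>M)"
    by (simp add: measure_def)
qed

lemma density_in_trimming:
  fixes R :: "'a::euclidean_space measure" and g :: "'a \<Rightarrow> real"
  assumes R: "R \<in> probs" and g_meas: "g \<in> borel_measurable R"
    and g0: "\<And>x. 0 \<le> g x" and g_le: "\<And>x. g x \<le> 1 / \<alpha>" and g_total: "integral\<^sup>L R g = 1"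
  shows "density R (\<lambda>x. ennreal (g x)) \<in> trimming \<alpha> R"
proof -
  interpret R: prob_space R using probsD(3)[OF R] .
  let ?\<nu> = "density R (\<lambda>x. ennreal (g x))"
  have g_int: "integrable R g"
    using g0 g_le by (intro R.integrable_const_bound[where B="1 / \<alpha>"] g_meas AE_I2) simp
  have sets_\<nu>: "sets ?\<nu> = sets borel" and space_\<nu>: "space ?\<nu> = UNIV"
    using probsD(1,2)[OF R] by simp_all
  have "emeasure ?\<nu> (space ?\<nu>) = 1"
    using measure_density_real(1)[OF g_int g0, of UNIV] g_total probsD(1,2)[OF R]
    by (simp add: space_\<nu>)
  then have "prob_space ?\<nu>" by (rule prob_spaceI)
  moreover have "measure ?\<nu> B \<le> measure R B / \<alpha>" if B: "B \<in> sets borel" for B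
  proof -
    have B': "B \<in> sets R" using B probsD(1)[OF R] by simp
    have "measure ?\<nu> B \<le> (\<integral>x. (1 / \<alpha>) * indicator B x \<partial>R)"
      unfolding measure_density_real(2)[OF g_int g0 B']
      using integrable_mult_indicator[OF B' g_int] B' g_le
      by (intro integral_mono) (auto split: split_indicator simp: mult.commute R.emeasure_eq_measure)
    then show ?thesis using probsD(2)[OF R] by simp
  qed
  ultimately show ?thesis
    using sets_\<nu> by (simp add: trimming_def probs_def)
qed

lemma density_on_cells:
  fixes \<phi> :: "'a::euclidean_space \<Rightarrow> 'c" and R :: "'a measure" and m :: "'c \<Rightarrow> real"
  assumes fin: "finite (range \<phi>)" and cells: "\<And>v. \<phi> -` {v} \<in> sets borel"
    and R: "R \<in> probs" and "0 < \<alpha>"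
    and m0: "\<And>v. 0 \<le> m v" and m_le: "\<And>v. m v \<le> measure R (\<phi> -` {v}) / \<alpha>"
    and m_sum: "sum m (range \<phi>) = 1"
  defines "\<nu> \<equiv> density R (\<lambda>x. ennreal (m (\<phi> x) / measure R (\<phi> -` {\<phi> x})))"
  shows "\<nu> \<in> trimming \<alpha> R" and "measure \<nu> (\<phi> -` {v}) = m v"
proof -
  define p where "p v = measure R (\<phi> -` {v})" for v
  define D where "D v = m v / p v" for v
  have D0: "0 \<le> D v" for v unfolding D_def p_def using m0[of v] by simp
  have D_le: "D v \<le> 1 / \<alpha>" for v
    using m_le[of v] \<open>0 < \<alpha>\<close> m0[of v] by (auto simp: D_def p_def divide_le_eq field_simps)
  have Dp: "D v * p v = m v" for v
    using m_le[of v] m0[of v] by (cases "p v = 0") (auto simp: D_def p_def)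
  have \<nu>_D: "\<nu> = density R (\<lambda>x. ennreal (D (\<phi> x)))"
    by (simp add: \<nu>_def D_def p_def)
  note cell_int = cell_integral[OF fin cells R]
  have "integral\<^sup>L R (\<lambda>x. D (\<phi> x)) = 1"
    using m_sum by (simp add: cell_int(2) Dp flip: p_def)
  with D0 D_le show "\<nu> \<in> trimming \<alpha> R"
    unfolding \<nu>_D by (intro density_in_trimming[OF R] borel_measurable_integrable cell_int(1))
  have "measure \<nu> (\<phi> -` {v}) = (\<integral>x. (\<lambda>u. if u = v then D u else 0) (\<phi> x) \<partial>R)"
    unfolding \<nu>_D using cells probsD(1)[OF R]
    by (subst measure_density_real(2)[OF cell_int(1) D0])
      (auto intro!: Bochner_Integration.integral_cong simp: indicator_def)
  also have "\<dots> = (\<Sum>u\<in>range \<phi>. (if u = v then D u else 0) * p u)"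
    unfolding p_def by (rule cell_int(2))
  also have "\<dots> = (\<Sum>u\<in>range \<phi>. if u = v then m u else 0)"
    by (intro sum.cong) (auto simp: Dp)
  also have "\<dots> = m v"
  proof (cases "v \<in> range \<phi>")
    case False
    then have "\<phi> -` {v} = {}" by auto
    then have "p v = 0" by (simp add: p_def)
    with False m0[of v] m_le[of v] \<open>0 < \<alpha>\<close> show ?thesis
      using fin by (simp add: p_def)
  qed (use fin in simp)
  finally show "measure \<nu> (\<phi> -` {v}) = m v" .
qed

lemma diagonal_tendsto_zero:
  fixes a :: "nat \<Rightarrow> nat \<Rightarrow> real"
  assumes lim: "\<And>k. a k \<longlonglongrightarrow> 0"
  shows "\<exists>kn. filterlim kn at_top sequentially \<and> (\<lambda>n. a (kn n) n) \<longlonglongrightarrow> 0"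
proof -
  have "\<exists>N. \<forall>n\<ge>N. \<bar>a k n\<bar> < inverse (real (Suc k))" for k
    using LIMSEQ_D[OF lim, of "inverse (real (Suc k))"] by auto
  then obtain N where N: "\<And>k n. N k \<le> n \<Longrightarrow> \<bar>a k n\<bar> < inverse (real (Suc k))"
    by metis
  define S where "S n = {j. j \<le> n \<and> N j \<le> n}" for n
  define kn where "kn n = Max (insert 0 (S n))" for n
  have fin: "finite (S n)" for n
    unfolding S_def by (rule finite_subset[of _ "{..n}"]) auto
  have kn_ge: "j \<in> S n \<Longrightarrow> j \<le> kn n" for j n
    unfolding kn_def using fin by simp
  have kn_in: "kn n \<in> S n" if "N 0 \<le> n" for n
  proof -
    have "0 \<in> S n" using that by (simp add: S_def)
    moreover from this have "Max (S n) \<in> S n"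
      by (intro Max_in fin) auto
    ultimately show ?thesis
      unfolding kn_def by (simp add: insert_absorb)
  qed
  have kn_top: "filterlim kn at_top sequentially"
    unfolding filterlim_at_top eventually_sequentially
    by (auto intro!: exI[of _ "max Z (N Z)" for Z] kn_ge simp: S_def)
  have "(\<lambda>n. inverse (real (Suc (kn n)))) \<longlonglongrightarrow> 0"
    using filterlim_compose[OF LIMSEQ_inverse_real_of_nat kn_top] by (simp add: o_def)
  moreover have "norm (a (kn n) n) \<le> inverse (real (Suc (kn n)))" if "N 0 \<le> n" for n
    using N[of "kn n" n] kn_in[OF that] by (simp add: S_def)
  then have "eventually (\<lambda>n. norm (a (kn n) n) \<le> inverse (real (Suc (kn n)))) sequentially"
    unfolding eventually_sequentially by blast
  ultimately have "(\<lambda>n. a (kn n) n) \<longlonglongrightarrow> 0"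
    by (rule Lim_null_comparison[rotated])
  with kn_top show ?thesis by blast
qed

lemma trimmed_cell_approximation:
  fixes \<phi> :: "'a::euclidean_space \<Rightarrow> 'c" and Pn :: "nat \<Rightarrow> 'a measure"
  assumes fin: "finite (range \<phi>)" and cells: "\<And>v. \<phi> -` {v} \<in> sets borel"
    and Pn: "\<And>n. 1 \<le> n \<Longrightarrow> Pn n \<in> probs"
    and lim: "\<And>v. v \<in> range \<phi> \<Longrightarrow> (\<lambda>n. measure (Pn n) (\<phi> -` {v})) \<longlonglongrightarrow> measure P (\<phi> -` {v})"
    and Q: "Q \<in> trimming \<alpha> P" and "0 < \<alpha>" and "\<alpha> \<le> 1"
  shows "\<exists>\<nu>. (\<forall>n\<ge>1. \<nu> n \<in> trimming \<alpha> (Pn n)) \<and>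
           (\<lambda>n. \<Sum>v\<in>range \<phi>. \<bar>measure (\<nu> n) (\<phi> -` {v}) - measure Q (\<phi> -` {v})\<bar>) \<longlonglongrightarrow> 0"
proof -
  have Q_probs: "Q \<in> probs" and Q_le: "\<And>B. B \<in> sets borel \<Longrightarrow> measure Q B \<le> measure P B / \<alpha>"
    using Q by (auto simp: trimming_def)
  define p where "p n v = measure (Pn n) (\<phi> -` {v})" for n v
  define q where "q v = measure Q (\<phi> -` {v})" for v
  define m where "m n = trim_weight \<alpha> (range \<phi>) (p n) q" for n
  define \<nu> where "\<nu> n = density (Pn n) (\<lambda>x. ennreal (m n (\<phi> x) / p n (\<phi> x)))" for n
  have unit: "(\<Sum>v\<in>range \<phi>. measure \<mu> (\<phi> -` {v})) = 1" if "\<mu> \<in> probs" for \<mu>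
    using cell_integral(2)[OF fin cells that, of "\<lambda>_. 1"] prob_space.prob_space[OF probsD(3)[OF that]]
    by simp
  have p0: "0 \<le> p n v" and q0: "0 \<le> q v" for n v
    by (simp_all add: p_def q_def)
  note m_props = trim_weight_properties[OF fin p0 q0 unit[OF Pn, folded p_def] unit[OF Q_probs, folded q_def]
      \<open>0 < \<alpha>\<close> \<open>\<alpha> \<le> 1\<close>, folded m_def]
  have \<nu>: "\<nu> n \<in> trimming \<alpha> (Pn n)" "measure (\<nu> n) (\<phi> -` {v}) = m n v" if "1 \<le> n" for n v
    using density_on_cells[OF fin cells Pn[OF that] \<open>0 < \<alpha>\<close>, of "m n"] m_props[OF that]
    by (simp_all add: \<nu>_def p_def)
  have "(\<lambda>n. capped_weight \<alpha> (p n) q v) \<longlonglongrightarrow> min (q v) (measure P (\<phi> -` {v}) / \<alpha>)"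
    if "v \<in> range \<phi>" for v
    unfolding capped_weight_def p_def by (intro tendsto_intros lim that) (use \<open>0 < \<alpha>\<close> in simp)
  moreover have "min (q v) (measure P (\<phi> -` {v}) / \<alpha>) = q v" for v
    using Q_le[OF cells] by (simp add: q_def)
  ultimately have "(\<lambda>n. 2 * (1 - sum (capped_weight \<alpha> (p n) q) (range \<phi>))) \<longlonglongrightarrow> 2 * (1 - sum q (range \<phi>))"
    by (auto intro!: tendsto_intros)
  then have deficit: "(\<lambda>n. 2 * (1 - sum (capped_weight \<alpha> (p n) q) (range \<phi>))) \<longlonglongrightarrow> 0"
    using unit[OF Q_probs] by (simp add: q_def)
  have "(\<lambda>n. \<Sum>v\<in>range \<phi>. \<bar>measure (\<nu> n) (\<phi> -` {v}) - q v\<bar>) \<longlonglongrightarrow> 0"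
  proof (rule Lim_null_comparison[OF _ deficit])
    show "eventually (\<lambda>n. norm (\<Sum>v\<in>range \<phi>. \<bar>measure (\<nu> n) (\<phi> -` {v}) - q v\<bar>)
        \<le> 2 * (1 - sum (capped_weight \<alpha> (p n) q) (range \<phi>))) sequentially"
      using eventually_ge_at_top[of 1]
      by eventually_elim (use \<nu> m_props(4) in \<open>simp add: sum_nonneg\<close>)
  qed
  with \<nu> show ?thesis unfolding q_def by blast
qed

lemma trimming_subset_liminf_of_cells:
  fixes \<phi> :: "nat \<Rightarrow> 'a::euclidean_space \<Rightarrow> 'c" and Pn :: "nat \<Rightarrow> 'a measure"
  assumes part: "shrinking_partitions \<phi>" and Pn: "\<And>n. 1 \<le> n \<Longrightarrow> Pn n \<in> probs"
    and lim: "\<And>k v. v \<in> range (\<phi> k) \<Longrightarrow>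
                (\<lambda>n. measure (Pn n) (\<phi> k -` {v})) \<longlonglongrightarrow> measure P (\<phi> k -` {v})"
    and "0 < \<alpha>" and "\<alpha> \<le> 1"
  shows "trimming \<alpha> P \<subseteq> set_liminf (\<lambda>n. trimming \<alpha> (Pn n))"
proof
  fix Q assume Q: "Q \<in> trimming \<alpha> P"
  have fin: "finite (range (\<phi> k))" and cells: "\<phi> k -` {v} \<in> sets borel" for k v
    using part by (auto simp: shrinking_partitions_def)
  define err where "err \<nu> k (n::nat) =
    (\<Sum>v\<in>range (\<phi> k). \<bar>measure (\<nu> n) (\<phi> k -` {v}) - measure Q (\<phi> k -` {v})\<bar>)" for \<nu> k n
  have "\<forall>k. \<exists>\<nu>. (\<forall>n\<ge>1. \<nu> n \<in> trimming \<alpha> (Pn n)) \<and> err \<nu> k \<longlonglongrightarrow> 0"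
    unfolding err_def using trimmed_cell_approximation[OF fin cells Pn lim Q \<open>0 < \<alpha>\<close> \<open>\<alpha> \<le> 1\<close>]
    by blast
  then obtain \<nu> where \<nu>_trim: "\<And>k n. 1 \<le> n \<Longrightarrow> \<nu> k n \<in> trimming \<alpha> (Pn n)"
    and \<nu>_err: "\<And>k. err (\<nu> k) k \<longlonglongrightarrow> 0"
    by metis
  obtain kn where kn: "filterlim kn at_top sequentially"
    and diag: "(\<lambda>n. err (\<nu> (kn n)) (kn n) n) \<longlonglongrightarrow> 0"
    using diagonal_tendsto_zero[of "\<lambda>k. err (\<nu> k) k", OF \<nu>_err] by blast
  have trim: "\<forall>n\<ge>1. \<nu> (kn n) n \<in> trimming \<alpha> (Pn n)"
    using \<nu>_trim by blast
  then have "eventually (\<lambda>n. \<nu> (kn n) n \<in> probs) sequentially"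
    unfolding eventually_sequentially by (auto simp: trimming_def)
  then have "weak_conv (\<lambda>n. \<nu> (kn n) n) Q"
    using weak_conv_of_cell_convergence[OF part _ _ kn] diag Q
    by (simp add: err_def trimming_def)
  moreover have "Q \<in> probs" using Q by (simp add: trimming_def)
  ultimately show "Q \<in> set_liminf (\<lambda>n. trimming \<alpha> (Pn n))"
    unfolding set_liminf_def using trim by (auto intro!: exI[of _ "\<lambda>n. \<nu> (kn n) n"])
qed

text \<open>Almost surely the empirical cell masses converge for all dyadic cells at once, and the
  deterministic result applies.\<close>

theorem theorem10:
  fixes M :: "'w measure" and X :: "nat \<Rightarrow> 'w \<Rightarrow> 'a::euclidean_space"
    and P :: "'a measure" and \<alpha> :: real
  assumes "prob_space M"
    and "\<And>i. X i \<in> borel_measurable M"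
    and "prob_space.indep_vars M (\<lambda>_. borel) X UNIV"
    and "\<And>i. distr M borel (X i) = P"
    and "P \<in> probs"
    and "0 < \<alpha>" and "\<alpha> \<le> 1"
  shows "AE \<omega> in M. trimming \<alpha> P \<subseteq> set_liminf (\<lambda>n. trimming \<alpha> (empirical X n \<omega>))"
proof -
  let ?cells = "\<Union>k. (\<lambda>v. dyadic_cell k -` {v}) ` range (dyadic_cell k :: 'a \<Rightarrow> _)"
  have "countable ?cells"
    by (intro countable_UN) (simp_all add: countable_finite finite_range_dyadic_cell)
  moreover have "?cells \<subseteq> sets borel"
    using dyadic_cell_borel by blast
  ultimately have "AE \<omega> in M. \<forall>A\<in>?cells. (\<lambda>n. measure (empirical X n \<omega>) A) \<longlonglongrightarrow> measure P A"
    by (rule empirical_AE_tendsto_countable[OF assms(1-4)])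
  then show ?thesis
  proof (rule AE_mp, intro AE_I2 impI)
    fix \<omega> assume conv: "\<forall>A\<in>?cells. (\<lambda>n. measure (empirical X n \<omega>) A) \<longlonglongrightarrow> measure P A"
    have lim: "(\<lambda>n. measure (empirical X n \<omega>) (dyadic_cell k -` {v})) \<longlonglongrightarrow> measure P (dyadic_cell k -` {v})"
      if "v \<in> range (dyadic_cell k)" for k v
      using conv that by blast
    show "trimming \<alpha> P \<subseteq> set_liminf (\<lambda>n. trimming \<alpha> (empirical X n \<omega>))"
      by (rule trimming_subset_liminf_of_cells[OF shrinking_partitions_dyadic_cell _ lim assms(6,7)])
        (simp add: empirical_in_probs)
  qed
qed

end
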